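(* Let a group $G$ act properly and isometrically on a proper geodesic metric space $X$ with basepoint $o$, let $f\in G$ be a contracting element, and let $C>0$ be such that every geodesic segment with both endpoints in $\mathrm{Ax}(f)$ is $C$-contracting. Given $r,M>0$, there exist $\hat r=\hat r(r,C,M)$ and $L_1=L_1(C,M)>0$ with the following property. Let $h\in E(f)$ satisfy $d(o,ho)>L_1$, let $g\in G$ and $\theta\in(0,1]$, and let $\alpha,\beta$ be two geodesics from $B(o,M)$ to $B(go,M)$. If $\alpha$ contains a $\theta$-segment with an $(r,h)$-barrier, then $\beta$ contains some $\theta$-segment with an $(\hat r,h)$-barrier.
   Context: A closed $U$ is $C$-contracting if every geodesic $\gamma$ with $d(\gamma,U)\ge C$ has $\mathrm{diam}(\pi_U(\gamma))\le C$ ($\pi_U$ nearest-point projection). An infinite-order $f$ is contracting if $n\mapsto f^no$ is a quasi-isometric embedding with contracting image. $E(f)=\{g\in G:\exists n>0,\ gf^ng^{-1}=f^{\pm n}\}$ is the maximal elementary subgroup containing $f$, and $\mathrm{Ax}(f)=E(f)\cdot o$. A $\theta$-segment of a geodesic $\gamma$ is a closed connected subsegment of length $\theta\ell(\gamma)$. A segment $\sigma$ has an $(r,h)$-barrier if there is $t\in G$ with $d(to,\sigma)\le r$ and $d(tho,\sigma)\le r$. *)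

theory Defs
  imports "HOL-Analysis.Analysis" "HOL-Algebra.Algebra"
begin

definition proper_metric :: "('x::metric_space) itself \<Rightarrow> bool" where
  "proper_metric _ \<longleftrightarrow> (\<forall>(x::'x) r. compact (cball x r))"

definition geodesic_seg :: "(real \<Rightarrow> 'x::metric_space) \<Rightarrow> 'x \<Rightarrow> 'x \<Rightarrow> real \<Rightarrow> bool" where
  "geodesic_seg \<gamma> a b L \<longleftrightarrow> L \<ge> 0 \<and> \<gamma> 0 = a \<and> \<gamma> L = b \<and>
     (\<forall>s\<in>{0..L}. \<forall>t\<in>{0..L}. dist (\<gamma> s) (\<gamma> t) = \<bar>s - t\<bar>)"

definition geodesic_space :: "('x::metric_space) itself \<Rightarrow> bool" where
  "geodesic_space _ \<longleftrightarrow> (\<forall>(a::'x) b. \<exists>\<gamma>. geodesic_seg \<gamma> a b (dist a b))"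

definition proj_pt :: "'x::metric_space set \<Rightarrow> 'x \<Rightarrow> 'x set" where
  "proj_pt U x = {p \<in> U. dist x p = infdist x U}"

definition proj_set :: "'x::metric_space set \<Rightarrow> 'x set \<Rightarrow> 'x set" where
  "proj_set U A = (\<Union>x\<in>A. proj_pt U x)"

definition contracting_set :: "real \<Rightarrow> 'x::metric_space set \<Rightarrow> bool" where
  "contracting_set C U \<longleftrightarrow> closed U \<and>
     (\<forall>\<gamma> a b. geodesic_seg \<gamma> a b (dist a b) \<longrightarrow>
        setdist (\<gamma> ` {0..dist a b}) U \<ge> C \<longrightarrow>
        (\<forall>p\<in>proj_set U (\<gamma> ` {0..dist a b}). \<forall>q\<in>proj_set U (\<gamma> ` {0..dist a b}). dist p q \<le> C))"

definition isometric_action :: "('g, 'b) monoid_scheme \<Rightarrow> ('g \<Rightarrow> 'x::metric_space \<Rightarrow> 'x) \<Rightarrow> bool" where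
  "isometric_action G act \<longleftrightarrow> group G \<and>
     (\<forall>x. act \<one>\<^bsub>G\<^esub> x = x) \<and>
     (\<forall>g\<in>carrier G. \<forall>h\<in>carrier G. \<forall>x. act (g \<otimes>\<^bsub>G\<^esub> h) x = act g (act h x)) \<and>
     (\<forall>g\<in>carrier G. \<forall>x y. dist (act g x) (act g y) = dist x y)"

definition proper_action :: "('g, 'b) monoid_scheme \<Rightarrow> ('g \<Rightarrow> 'x::metric_space \<Rightarrow> 'x) \<Rightarrow> bool" where
  "proper_action G act \<longleftrightarrow>
     (\<forall>x r. finite {g \<in> carrier G. act g ` cball x r \<inter> cball x r \<noteq> {}})"

definition contracting_elt :: "('g, 'b) monoid_scheme \<Rightarrow> ('g \<Rightarrow> 'x::metric_space \<Rightarrow> 'x) \<Rightarrow> 'x \<Rightarrow> 'g \<Rightarrow> bool" where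
  "contracting_elt G act x0 f \<longleftrightarrow> f \<in> carrier G \<and>
     (\<forall>n::nat. n > 0 \<longrightarrow> f [^]\<^bsub>G\<^esub> n \<noteq> \<one>\<^bsub>G\<^esub>) \<and>
     (\<exists>lam c. lam \<ge> 1 \<and> c \<ge> 0 \<and> (\<forall>m n::int.
        \<bar>m - n\<bar> / lam - c \<le> dist (act (f [^]\<^bsub>G\<^esub> m) x0) (act (f [^]\<^bsub>G\<^esub> n) x0) \<and>
        dist (act (f [^]\<^bsub>G\<^esub> m) x0) (act (f [^]\<^bsub>G\<^esub> n) x0) \<le> lam * \<bar>m - n\<bar> + c)) \<and>
     (\<exists>C. contracting_set C (range (\<lambda>n::int. act (f [^]\<^bsub>G\<^esub> n) x0)))"

definition elem_sub :: "('g, 'b) monoid_scheme \<Rightarrow> 'g \<Rightarrow> 'g set" where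
  "elem_sub G f = {g \<in> carrier G. \<exists>n::nat. n > 0 \<and>
      (g \<otimes>\<^bsub>G\<^esub> (f [^]\<^bsub>G\<^esub> n) \<otimes>\<^bsub>G\<^esub> inv\<^bsub>G\<^esub> g = f [^]\<^bsub>G\<^esub> n \<or>
       g \<otimes>\<^bsub>G\<^esub> (f [^]\<^bsub>G\<^esub> n) \<otimes>\<^bsub>G\<^esub> inv\<^bsub>G\<^esub> g = f [^]\<^bsub>G\<^esub> (- int n))}"

definition axis :: "('g, 'b) monoid_scheme \<Rightarrow> ('g \<Rightarrow> 'x \<Rightarrow> 'x) \<Rightarrow> 'x \<Rightarrow> 'g \<Rightarrow> 'x set" where
  "axis G act x0 f = (\<lambda>g. act g x0) ` elem_sub G f"

text \<open>The subsegment of gamma (of length L) over [s, s + theta L] is a theta-segment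
  when it lies inside [0, L].\<close>
definition theta_seg :: "(real \<Rightarrow> 'x) \<Rightarrow> real \<Rightarrow> real \<Rightarrow> real \<Rightarrow> 'x set" where
  "theta_seg \<gamma> L \<theta> s = \<gamma> ` {s .. s + \<theta> * L}"

definition has_barrier :: "('g, 'b) monoid_scheme \<Rightarrow> ('g \<Rightarrow> 'x::metric_space \<Rightarrow> 'x) \<Rightarrow> 'x \<Rightarrow> real \<Rightarrow> 'g \<Rightarrow> 'x set \<Rightarrow> bool" where
  "has_barrier G act x0 r h \<sigma> \<longleftrightarrow> (\<exists>t\<in>carrier G.
     infdist (act t x0) \<sigma> \<le> r \<and> infdist (act (t \<otimes>\<^bsub>G\<^esub> h) x0) \<sigma> \<le> r)"

definition contains_barrier_seg :: "('g, 'b) monoid_scheme \<Rightarrow> ('g \<Rightarrow> 'x::metric_space \<Rightarrow> 'x) \<Rightarrow> 'x \<Rightarrow> real \<Rightarrow> 'g \<Rightarrow> real \<Rightarrow> (real \<Rightarrow> 'x) \<Rightarrow> real \<Rightarrow> bool" where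
  "contains_barrier_seg G act x0 r h \<theta> \<gamma> L \<longleftrightarrow> (\<exists>s. 0 \<le> s \<and> s + \<theta> * L \<le> L \<and>
     has_barrier G act x0 r h (theta_seg \<gamma> L \<theta> s))"

end

theory Submission
  imports Defs
begin

text \<open>Let t be the group element of the barrier of \<alpha>. After translating by the inverse of t,
  the points x0 and h x0 are r-close to a \<theta>-segment of \<alpha>, and a geodesic \<sigma> from x0 to h x0 is
  C-contracting because both endpoints lie on Ax(f). A nearest-point projection to \<sigma> nearly
  lies on every geodesic to a point of \<sigma> (up to 4C); comparing \<beta> with \<alpha>, this shows that
  when \<sigma> is long the projections of the endpoints of \<beta> lie close to x0 and h x0 and more
  than C apart, so \<beta> itself passes close to x0 and h x0. The two times at which it does so
  differ by at most \<theta> |\<beta>| plus a constant, so some \<theta>-segment of \<beta> is close to both points,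
  and translating back by t gives its barrier. When d(x0, h x0) is short, the initial
  \<theta>-segment of \<beta> has the barrier t = 1.\<close>

definition geodesic_path :: "(real \<Rightarrow> 'x::metric_space) \<Rightarrow> real \<Rightarrow> bool" where
  "geodesic_path \<gamma> L \<longleftrightarrow> (\<forall>s\<in>{0..L}. \<forall>t\<in>{0..L}. dist (\<gamma> s) (\<gamma> t) = \<bar>s - t\<bar>)"

lemma geodesic_seg_iff:
  "geodesic_seg \<gamma> a b L \<longleftrightarrow> 0 \<le> L \<and> \<gamma> 0 = a \<and> \<gamma> L = b \<and> geodesic_path \<gamma> L"
  unfolding geodesic_seg_def geodesic_path_def by auto

lemma geodesic_path_dist:
  "geodesic_path \<gamma> L \<Longrightarrow> s \<in> {0..L} \<Longrightarrow> t \<in> {0..L} \<Longrightarrow> dist (\<gamma> s) (\<gamma> t) = \<bar>s - t\<bar>"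
  unfolding geodesic_path_def by blast

lemma geodesic_path_continuous_on: "geodesic_path \<gamma> L \<Longrightarrow> continuous_on {0..L} \<gamma>"
  unfolding continuous_on_iff geodesic_path_def by (metis dist_real_def)

lemma compact_geodesic_path_image:
  "geodesic_path \<gamma> L \<Longrightarrow> 0 \<le> a \<Longrightarrow> b \<le> L \<Longrightarrow> compact (\<gamma> ` {a..b})"
  by (intro compact_continuous_image continuous_on_subset[OF geodesic_path_continuous_on]) auto

lemma geodesic_path_subpath: "geodesic_path \<gamma> L \<Longrightarrow> T \<le> L \<Longrightarrow> geodesic_path \<gamma> T"
  unfolding geodesic_path_def by auto

lemma geodesic_path_reverse: "geodesic_path \<gamma> L \<Longrightarrow> geodesic_path (\<lambda>t. \<gamma> (L - t)) L"
  unfolding geodesic_path_def by (auto simp: abs_minus_commute)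

lemma geodesic_path_isometry:
  "(\<And>x y. dist (\<phi> x) (\<phi> y) = dist x y) \<Longrightarrow> geodesic_path \<gamma> L \<Longrightarrow> geodesic_path (\<lambda>t. \<phi> (\<gamma> t)) L"
  unfolding geodesic_path_def by simp

lemma diameter_geodesic_path_image:
  assumes "geodesic_path \<gamma> L" "0 \<le> L"
  shows "diameter (\<gamma> ` {0..L}) \<le> L"
  using assms by (auto simp: diameter_def geodesic_path_dist intro!: cSUP_least)

lemma geodesic_path_length_le:
  assumes "geodesic_path \<alpha> A" "0 \<le> A" "geodesic_path \<beta> B" "0 \<le> B"
    and "dist (\<alpha> 0) (\<beta> 0) \<le> e" "dist (\<alpha> A) (\<beta> B) \<le> e"
  shows "A \<le> B + 2 * e"
  using assms dist_triangle[of "\<alpha> 0" "\<alpha> A" "\<beta> 0"] dist_triangle[of "\<beta> 0" "\<alpha> A" "\<beta> B"]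
  by (simp add: geodesic_path_dist dist_commute)

lemma infdist_isometry_image:
  "(\<And>x y. dist (\<phi> x) (\<phi> y) = dist x y) \<Longrightarrow> infdist (\<phi> x) (\<phi> ` S) = infdist x S"
  unfolding infdist_def by (simp add: image_image)

lemma proj_pt_nonempty:
  assumes "compact U" "U \<noteq> {}"
  obtains P where "P \<in> proj_pt U x"
proof -
  obtain P where "P \<in> U" and P: "\<And>z. z \<in> U \<Longrightarrow> dist x P \<le> dist x z"
    using continuous_attains_inf[OF assms continuous_on_dist[OF continuous_on_const continuous_on_id]]
    by blast
  then have "infdist x U = dist x P"
    using assms(2) by (auto simp: infdist_notempty intro!: antisym cINF_lower cINF_greatest)
  with \<open>P \<in> U\<close> show ?thesis
    using that unfolding proj_pt_def by auto
qed

lemma contracting_set_proj_dist_le: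
  assumes cs: "contracting_set C U" and "U \<noteq> {}"
    and \<beta>: "geodesic_path \<beta> T" "0 \<le> T"
    and far: "\<And>t. t \<in> {0..T} \<Longrightarrow> C \<le> infdist (\<beta> t) U"
    and P: "P \<in> proj_pt U (\<beta> 0)" and Q: "Q \<in> proj_pt U (\<beta> T)"
  shows "dist P Q \<le> C"
proof -
  have T: "dist (\<beta> 0) (\<beta> T) = T"
    using \<beta> by (simp add: geodesic_path_dist)
  have "geodesic_seg \<beta> (\<beta> 0) (\<beta> T) (dist (\<beta> 0) (\<beta> T))"
    using \<beta> by (simp add: T geodesic_seg_iff)
  moreover have "C \<le> setdist (\<beta> ` {0..dist (\<beta> 0) (\<beta> T)}) U"
    using far \<beta>(2) \<open>U \<noteq> {}\<close> unfolding T le_setdist_iff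
    by (fastforce intro: order_trans infdist_le)
  moreover have "P \<in> proj_set U (\<beta> ` {0..dist (\<beta> 0) (\<beta> T)})"
    and "Q \<in> proj_set U (\<beta> ` {0..dist (\<beta> 0) (\<beta> T)})"
    using P Q \<beta>(2) unfolding proj_set_def T by auto
  ultimately show ?thesis
    using cs unfolding contracting_set_def by blast
qed

lemma continuous_on_first_crossing:
  fixes \<phi> :: "real \<Rightarrow> real"
  assumes cont: "continuous_on {a..b} \<phi>" and "c < \<phi> a" and t: "t \<in> {a..b}" "\<phi> t \<le> c"
  obtains t1 where "t1 \<in> {a..b}" "\<phi> t1 = c" "\<And>t. t \<in> {a..t1} \<Longrightarrow> c \<le> \<phi> t"
proof -
  define S where "S = {t\<in>{a..b}. \<phi> t \<le> c}"
  have "S \<noteq> {}"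
    using t unfolding S_def by blast
  moreover have "bdd_below S"
    unfolding S_def by (auto intro: bdd_belowI[of _ a])
  moreover have "closed S"
    using continuous_closed_preimage[OF cont closed_atLeastAtMost closed_atMost]
    unfolding S_def vimage_def Int_def by simp
  ultimately have "Inf S \<in> S"
    by (rule closed_contains_Inf)
  define t1 where "t1 = Inf S"
  have t1: "t1 \<in> {a..b}" "\<phi> t1 \<le> c"
    using \<open>Inf S \<in> S\<close> unfolding t1_def S_def by auto
  have before: "c < \<phi> t" if "a \<le> t" "t < t1" for t
    using cInf_lower[OF _ \<open>bdd_below S\<close>, of t] that t1 unfolding t1_def S_def by force
  obtain t' where t': "a \<le> t'" "t' \<le> t1" "\<phi> t' = c"
    using IVT2'[of \<phi> t1 c a] \<open>c < \<phi> a\<close> t1 continuous_on_subset[OF cont] by auto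
  then have "t' = t1"
    using before[of t'] by fastforce
  with t' have "\<phi> t1 = c"
    by simp
  moreover have "c \<le> \<phi> t" if "t \<in> {a..t1}" for t
    using before[of t] that \<open>\<phi> t1 = c\<close> by (cases "t = t1") auto
  ultimately show ?thesis
    using that t1 by blast
qed

text \<open>At the first time t where \<beta> is C-close to U, the contraction property on [0, t] puts
  a projection of \<beta> t within C of P.\<close>

lemma contracting_set_geodesic_near_proj_start:
  assumes cs: "contracting_set C U" and U: "compact U" "U \<noteq> {}" and "C > 0"
    and \<beta>: "geodesic_path \<beta> B" "0 \<le> B"
    and P: "P \<in> proj_pt U (\<beta> 0)" and Q: "Q \<in> proj_pt U (\<beta> B)" and PQ: "dist P Q > C"
  shows "\<exists>t\<in>{0..B}. dist (\<beta> t) P \<le> 2 * C"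
proof (cases "infdist (\<beta> 0) U \<le> C")
  case True
  then show ?thesis
    using P \<beta>(2) \<open>C > 0\<close> unfolding proj_pt_def by (intro bexI[of _ 0]) auto
next
  case False
  have "\<exists>t\<in>{0..B}. infdist (\<beta> t) U \<le> C"
  proof (rule ccontr)
    assume "\<not> ?thesis"
    then have "dist P Q \<le> C"
      using contracting_set_proj_dist_le[OF cs U(2) \<beta> _ P Q] by force
    with PQ show False by simp
  qed
  then obtain t1 where t1: "t1 \<in> {0..B}" "infdist (\<beta> t1) U = C"
    and far: "\<And>t. t \<in> {0..t1} \<Longrightarrow> C \<le> infdist (\<beta> t) U"
    using continuous_on_first_crossing[OF continuous_on_infdist[OF geodesic_path_continuous_on[OF \<beta>(1)]]]
      False by (metis not_less)
  obtain Q1 where Q1: "Q1 \<in> proj_pt U (\<beta> t1)"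
    using proj_pt_nonempty[OF U] .
  have "dist P Q1 \<le> C"
    using contracting_set_proj_dist_le[OF cs U(2) geodesic_path_subpath[OF \<beta>(1)] _ far P Q1] t1
    by simp
  moreover have "dist (\<beta> t1) Q1 = C"
    using Q1 t1 unfolding proj_pt_def by simp
  ultimately show ?thesis
    using dist_triangle[of "\<beta> t1" P Q1] t1 by (intro bexI[of _ t1]) (auto simp: dist_commute)
qed

lemma contracting_set_geodesic_near_proj_end:
  assumes "contracting_set C U" "compact U" "U \<noteq> {}" "C > 0"
    and \<beta>: "geodesic_path \<beta> B" "0 \<le> B"
    and P: "P \<in> proj_pt U (\<beta> 0)" and Q: "Q \<in> proj_pt U (\<beta> B)" and "dist P Q > C"
  shows "\<exists>t\<in>{0..B}. dist (\<beta> t) Q \<le> 2 * C"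
proof -
  obtain t where "t \<in> {0..B}" "dist (\<beta> (B - t)) Q \<le> 2 * C"
    using contracting_set_geodesic_near_proj_start[OF assms(1-4) geodesic_path_reverse[OF \<beta>(1)] \<beta>(2),
        of Q P] P Q \<open>dist P Q > C\<close> by (auto simp: dist_commute)
  then show ?thesis
    by (intro bexI[of _ "B - t"]) auto
qed

text \<open>If P is far from z, the geodesic from x to z passes within 2C of P.\<close>

lemma contracting_set_proj_triangle:
  assumes gs: "geodesic_space TYPE('x::metric_space)"
    and cs: "contracting_set C U" and U: "compact U" "U \<noteq> {}" and "C > 0"
    and P: "P \<in> proj_pt U (x::'x)" and z: "z \<in> U"
  shows "dist x P + dist P z \<le> dist x z + 4 * C"
proof (cases "dist P z \<le> C")
  case True
  have "dist x P \<le> dist x z"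
    using P infdist_le[OF z, of x] unfolding proj_pt_def by simp
  with True \<open>C > 0\<close> show ?thesis by simp
next
  case False
  define L where "L = dist x z"
  obtain \<sigma> where \<sigma>: "geodesic_seg \<sigma> x z L"
    using gs unfolding geodesic_space_def L_def by blast
  then have \<sigma>_path: "geodesic_path \<sigma> L" "0 \<le> L" and \<sigma>_ends: "\<sigma> 0 = x" "\<sigma> L = z"
    by (simp_all add: geodesic_seg_iff)
  have "P \<in> proj_pt U (\<sigma> 0)" "z \<in> proj_pt U (\<sigma> L)"
    using P z \<sigma>_ends unfolding proj_pt_def by simp_all
  then obtain t where t: "t \<in> {0..L}" "dist (\<sigma> t) P \<le> 2 * C"
    using contracting_set_geodesic_near_proj_start[OF cs U \<open>C > 0\<close> \<sigma>_path] False by force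
  have "dist x (\<sigma> t) = t" "dist (\<sigma> t) z = L - t"
    using geodesic_path_dist[OF \<sigma>_path(1), of 0 t] geodesic_path_dist[OF \<sigma>_path(1), of t L]
      t \<sigma>_ends \<sigma>_path(2) by simp_all
  then show ?thesis
    using dist_triangle[of x P "\<sigma> t"] dist_triangle[of P z "\<sigma> t"] t unfolding L_def
    by (simp add: dist_commute)
qed

text \<open>The length of \<beta> is at most the length of the path through the projections P1, P2 of
  its endpoints, and each of its endpoints nearly sees p resp. q through P1 resp. P2; via \<alpha>,
  this forces P1 close to p, P2 close to q, and hence P1, P2 far apart.\<close>

lemma contracting_set_proj_ends_near_ordered:
  assumes gs: "geodesic_space TYPE('x::metric_space)" and "C > 0"
    and cs: "contracting_set C U" and U: "compact U"
    and pq: "p \<in> U" "q \<in> U" "diameter U \<le> dist p q"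
    and \<alpha>: "geodesic_path \<alpha> A" and \<beta>: "geodesic_path \<beta> B" "0 \<le> B"
    and ends: "dist (\<alpha> 0) (\<beta> 0) \<le> e" "dist (\<alpha> A) (\<beta> B) \<le> e"
    and uv: "u \<in> {0..A}" "v \<in> {0..A}" "u \<le> v"
    and near: "dist (\<alpha> u) p \<le> r" "dist (\<alpha> v) (q::'x) \<le> r"
    and long: "dist p q > 4 * e + 4 * r + 9 * C"
    and P1: "P1 \<in> proj_pt U (\<beta> 0)" and P2: "P2 \<in> proj_pt U (\<beta> B)"
  shows "dist P1 p \<le> 4 * e + 4 * r + 8 * C" "dist P2 q \<le> 4 * e + 4 * r + 8 * C" "dist P1 P2 > C"
proof -
  have "U \<noteq> {}"
    using pq by auto
  have "P1 \<in> U" "P2 \<in> U"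
    using P1 P2 unfolding proj_pt_def by auto
  then have P12: "dist P1 P2 \<le> dist p q"
    using diameter_bounded_bound[OF compact_imp_bounded[OF U]] pq(3) by (meson order_trans)
  have \<alpha>_dist: "dist (\<alpha> 0) (\<alpha> u) = u" "dist (\<alpha> u) (\<alpha> v) = v - u"
    "dist (\<alpha> v) (\<alpha> A) = A - v" "dist (\<alpha> 0) (\<alpha> A) = A"
    using uv by (auto simp: geodesic_path_dist[OF \<alpha>])
  have \<beta>_dist: "dist (\<beta> 0) (\<beta> B) = B"
    using \<beta> by (simp add: geodesic_path_dist)
  have "dist (\<beta> 0) P1 + dist P1 p \<le> dist (\<beta> 0) p + 4 * C"
    using contracting_set_proj_triangle[OF gs cs U \<open>U \<noteq> {}\<close> \<open>C > 0\<close> P1 pq(1)] .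
  moreover have "dist (\<beta> B) P2 + dist P2 q \<le> dist (\<beta> B) q + 4 * C"
    using contracting_set_proj_triangle[OF gs cs U \<open>U \<noteq> {}\<close> \<open>C > 0\<close> P2 pq(2)] .
  moreover have "dist (\<beta> 0) p \<le> e + u + r"
    using dist_triangle[of "\<beta> 0" p "\<alpha> 0"] dist_triangle[of "\<alpha> 0" p "\<alpha> u"] ends(1) \<alpha>_dist near(1)
    by (simp add: dist_commute)
  moreover have "dist (\<beta> B) q \<le> e + (A - v) + r"
    using dist_triangle[of "\<beta> B" q "\<alpha> A"] dist_triangle[of "\<alpha> A" q "\<alpha> v"] ends(2) \<alpha>_dist near(2)
    by (simp add: dist_commute)
  moreover have "dist p q \<le> (v - u) + 2 * r"
    using dist_triangle[of p q "\<alpha> u"] dist_triangle[of "\<alpha> u" q "\<alpha> v"] \<alpha>_dist near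
    by (simp add: dist_commute)
  moreover have "A \<le> B + 2 * e"
    using geodesic_path_length_le[OF \<alpha> _ \<beta> ends] uv by simp
  moreover have "B \<le> dist (\<beta> 0) P1 + dist P1 P2 + dist P2 (\<beta> B)"
    using dist_triangle[of "\<beta> 0" "\<beta> B" P1] dist_triangle[of P1 "\<beta> B" P2] \<beta>_dist by simp
  ultimately have "dist P1 p + dist P2 q + (dist p q - dist P1 P2) \<le> 4 * e + 4 * r + 8 * C"
    by (simp add: dist_commute)
  then show "dist P1 p \<le> 4 * e + 4 * r + 8 * C" "dist P2 q \<le> 4 * e + 4 * r + 8 * C" "dist P1 P2 > C"
    using P12 long zero_le_dist[of P1 p] zero_le_dist[of P2 q] by linarith+
qed

lemma contracting_set_fellow_travel:
  assumes "geodesic_space TYPE('x::metric_space)" "C > 0" and cs: "contracting_set C U"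
    and U: "compact U" and pq: "p \<in> U" "q \<in> U" "diameter U \<le> dist p q"
    and "geodesic_path \<alpha> A" and \<beta>: "geodesic_path \<beta> B" "0 \<le> B"
    and "dist (\<alpha> 0) (\<beta> 0) \<le> e" "dist (\<alpha> A) (\<beta> B) \<le> e"
    and uv: "u \<in> {0..A}" "v \<in> {0..A}"
    and near: "dist (\<alpha> u) p \<le> r" "dist (\<alpha> v) (q::'x) \<le> r"
    and long: "dist p q > 4 * e + 4 * r + 9 * C"
  shows "(\<exists>t\<in>{0..B}. dist (\<beta> t) p \<le> 4 * e + 4 * r + 10 * C)
    \<and> (\<exists>t\<in>{0..B}. dist (\<beta> t) q \<le> 4 * e + 4 * r + 10 * C)"
proof -
  define K where "K = 4 * e + 4 * r + 8 * C"
  have "U \<noteq> {}"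
    using pq by auto
  obtain P1 P2 where P1: "P1 \<in> proj_pt U (\<beta> 0)" and P2: "P2 \<in> proj_pt U (\<beta> B)"
    using proj_pt_nonempty[OF U \<open>U \<noteq> {}\<close>] by metis
  have "dist P1 P2 > C \<and> (dist P1 p \<le> K \<and> dist P2 q \<le> K \<or> dist P1 q \<le> K \<and> dist P2 p \<le> K)"
  proof (cases "u \<le> v")
    case True
    then show ?thesis
      using contracting_set_proj_ends_near_ordered[OF assms(1-4) pq assms(8-12) uv True near long P1 P2]
      unfolding K_def by blast
  next
    case False
    have "diameter U \<le> dist q p" "dist q p > 4 * e + 4 * r + 9 * C"
      using pq(3) long by (simp_all add: dist_commute)
    then show ?thesis
      using contracting_set_proj_ends_near_ordered[OF assms(1-4) pq(2,1) _ assms(8-12) uv(2,1) _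
          near(2,1) _ P1 P2] False
      unfolding K_def by force
  qed
  moreover obtain t1 t2 where "t1 \<in> {0..B}" "dist (\<beta> t1) P1 \<le> 2 * C"
    and "t2 \<in> {0..B}" "dist (\<beta> t2) P2 \<le> 2 * C"
    using contracting_set_geodesic_near_proj_start[OF cs U \<open>U \<noteq> {}\<close> \<open>C > 0\<close> \<beta> P1 P2]
      contracting_set_geodesic_near_proj_end[OF cs U \<open>U \<noteq> {}\<close> \<open>C > 0\<close> \<beta> P1 P2] calculation
    by blast
  ultimately show ?thesis
    using dist_triangle[of "\<beta> t1" p P1] dist_triangle[of "\<beta> t2" q P2]
      dist_triangle[of "\<beta> t1" q P1] dist_triangle[of "\<beta> t2" p P2]
    unfolding K_def by force
qed

lemma theta_seg_near_two_points_ordered: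
  assumes \<beta>: "geodesic_path \<beta> B" and \<theta>: "0 \<le> \<theta>" "\<theta> \<le> 1"
    and t: "t1 \<in> {0..B}" "t2 \<in> {0..B}" "t1 \<le> t2" "t2 - t1 \<le> \<theta> * B + E" and "0 \<le> E"
    and near: "dist p (\<beta> t1) \<le> R" "dist q (\<beta> t2) \<le> R"
  shows "\<exists>s. 0 \<le> s \<and> s + \<theta> * B \<le> B \<and>
    infdist p (theta_seg \<beta> B \<theta> s) \<le> R + E \<and> infdist q (theta_seg \<beta> B \<theta> s) \<le> R + E"
proof -
  have \<theta>B: "0 \<le> \<theta> * B" "\<theta> * B \<le> B"
    using \<theta> t by (auto simp: mult_left_le_one_le)
  define s where "s = min t1 (B - \<theta> * B)"
  define w where "w = min t2 (s + \<theta> * B)"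
  have s: "0 \<le> s" "s + \<theta> * B \<le> B" "s \<le> t1" "t1 \<le> s + \<theta> * B"
    using t \<theta>B unfolding s_def by auto
  have w: "s \<le> w" "w \<le> s + \<theta> * B" "w \<le> t2" "t2 - w \<le> E"
    using s t \<open>0 \<le> E\<close> unfolding w_def s_def by (auto simp: min_def)
  have "infdist p (theta_seg \<beta> B \<theta> s) \<le> dist p (\<beta> t1)"
    using s unfolding theta_seg_def by (auto intro: infdist_le)
  have "infdist q (theta_seg \<beta> B \<theta> s) \<le> dist q (\<beta> w)"
    using w unfolding theta_seg_def by (auto intro: infdist_le)
  also have "\<dots> \<le> dist q (\<beta> t2) + dist (\<beta> t2) (\<beta> w)"
    by (rule dist_triangle)
  also have "dist (\<beta> t2) (\<beta> w) = t2 - w"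
    using s w t by (simp add: geodesic_path_dist[OF \<beta>])
  finally show ?thesis
    using \<open>infdist p _ \<le> _\<close> s w near \<open>0 \<le> E\<close> by (intro exI[of _ s]) auto
qed

lemma theta_seg_near_two_points:
  assumes "geodesic_path \<beta> B" "0 \<le> \<theta>" "\<theta> \<le> 1"
    and t: "t1 \<in> {0..B}" "t2 \<in> {0..B}" "\<bar>t2 - t1\<bar> \<le> \<theta> * B + E" and "0 \<le> E"
    and near: "dist p (\<beta> t1) \<le> R" "dist q (\<beta> t2) \<le> R"
  shows "\<exists>s. 0 \<le> s \<and> s + \<theta> * B \<le> B \<and>
    infdist p (theta_seg \<beta> B \<theta> s) \<le> R + E \<and> infdist q (theta_seg \<beta> B \<theta> s) \<le> R + E"
proof (cases "t1 \<le> t2")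
  case True
  then show ?thesis
    using theta_seg_near_two_points_ordered[OF assms(1-3) t(1,2) True _ \<open>0 \<le> E\<close> near] t(3) by simp
next
  case False
  then show ?thesis
    using theta_seg_near_two_points_ordered[OF assms(1-3) t(2,1) _ _ \<open>0 \<le> E\<close> near(2,1)] t(3) by auto
qed

lemma theta_seg_infdist_attained:
  assumes "geodesic_path \<alpha> A" "0 \<le> A" "0 \<le> \<theta>" "0 \<le> s" "s + \<theta> * A \<le> A"
  obtains u where "u \<in> {s..s + \<theta> * A}" "dist (\<alpha> u) p = infdist p (theta_seg \<alpha> A \<theta> s)"
proof -
  have "compact (theta_seg \<alpha> A \<theta> s)" "theta_seg \<alpha> A \<theta> s \<noteq> {}"
    using compact_geodesic_path_image[OF assms(1,4,5)] assms(2,3) unfolding theta_seg_def by auto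
  then obtain P where "P \<in> proj_pt (theta_seg \<alpha> A \<theta> s) p"
    by (rule proj_pt_nonempty)
  then show ?thesis
    using that unfolding proj_pt_def theta_seg_def by (auto simp: dist_commute)
qed

lemma theta_seg_transfer:
  assumes gs: "geodesic_space TYPE('x::metric_space)" and "C > 0"
    and cs: "contracting_set C U" and U: "compact U"
    and pq: "p \<in> U" "q \<in> U" "diameter U \<le> dist p q"
    and \<alpha>: "geodesic_path \<alpha> A" "0 \<le> A" and \<beta>: "geodesic_path \<beta> B" "0 \<le> B"
    and ends: "dist (\<alpha> 0) (\<beta> 0) \<le> e" "dist (\<alpha> A) (\<beta> B) \<le> e"
    and \<theta>: "0 \<le> \<theta>" "\<theta> \<le> 1" and s: "0 \<le> s" "s + \<theta> * A \<le> A"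
    and near: "infdist p (theta_seg \<alpha> A \<theta> s) \<le> r" "infdist (q::'x) (theta_seg \<alpha> A \<theta> s) \<le> r"
    and long: "dist p q > 4 * e + 4 * r + 9 * C"
  shows "\<exists>s'. 0 \<le> s' \<and> s' + \<theta> * B \<le> B \<and>
    infdist p (theta_seg \<beta> B \<theta> s') \<le> 14 * e + 14 * r + 30 * C \<and>
    infdist q (theta_seg \<beta> B \<theta> s') \<le> 14 * e + 14 * r + 30 * C"
proof -
  obtain u v where uv: "u \<in> {s..s + \<theta> * A}" "v \<in> {s..s + \<theta> * A}"
    and "dist (\<alpha> u) p = infdist p (theta_seg \<alpha> A \<theta> s)" "dist (\<alpha> v) q = infdist q (theta_seg \<alpha> A \<theta> s)"
    using theta_seg_infdist_attained[OF \<alpha> \<theta>(1) s] by metis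
  with near have near_uv: "dist (\<alpha> u) p \<le> r" "dist (\<alpha> v) q \<le> r"
    by simp_all
  have "u \<in> {0..A}" "v \<in> {0..A}"
    using uv s by auto
  define R where "R = 4 * e + 4 * r + 10 * C"
  obtain t1 t2 where t: "t1 \<in> {0..B}" "t2 \<in> {0..B}"
    and near_t: "dist p (\<beta> t1) \<le> R" "dist q (\<beta> t2) \<le> R"
    using contracting_set_fellow_travel[OF gs \<open>C > 0\<close> cs U pq \<alpha>(1) \<beta> ends
        \<open>u \<in> {0..A}\<close> \<open>v \<in> {0..A}\<close> near_uv long]
    unfolding R_def by (auto simp: dist_commute)
  have "e \<ge> 0" "r \<ge> 0"
    using ends(1) near(1) zero_le_dist[of "\<alpha> 0" "\<beta> 0"] infdist_nonneg[of p "theta_seg \<alpha> A \<theta> s"]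
    by linarith+
  have "dist p q \<le> dist p (\<alpha> u) + dist (\<alpha> u) (\<alpha> v) + dist (\<alpha> v) q"
    using dist_triangle[of p q "\<alpha> u"] dist_triangle[of "\<alpha> u" q "\<alpha> v"] by linarith
  also have "\<dots> \<le> \<theta> * A + 2 * r"
    using near_uv uv \<open>u \<in> {0..A}\<close> \<open>v \<in> {0..A}\<close>
    by (auto simp: geodesic_path_dist[OF \<alpha>(1)] dist_commute)
  also have "\<theta> * A \<le> \<theta> * (B + 2 * e)"
    using geodesic_path_length_le[OF \<alpha> \<beta> ends] \<theta> by (intro mult_left_mono)
  also have "\<dots> \<le> \<theta> * B + 2 * e"
    using \<theta> \<open>e \<ge> 0\<close> by (simp add: distrib_left mult_left_le_one_le)
  finally have pq_dist: "dist p q \<le> \<theta> * B + 2 * e + 2 * r"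
    by simp
  have "\<bar>t2 - t1\<bar> \<le> dist (\<beta> t1) p + dist p q + dist q (\<beta> t2)"
    using dist_triangle[of "\<beta> t1" "\<beta> t2" p] dist_triangle[of p "\<beta> t2" q] t
    by (simp add: geodesic_path_dist[OF \<beta>(1)] abs_minus_commute)
  then have E: "\<bar>t2 - t1\<bar> \<le> \<theta> * B + (2 * R + 2 * e + 2 * r)"
    using near_t pq_dist by (simp add: dist_commute)
  have "0 \<le> 2 * R + 2 * e + 2 * r"
    using \<open>e \<ge> 0\<close> \<open>r \<ge> 0\<close> \<open>C > 0\<close> unfolding R_def by simp
  moreover have "R + (2 * R + 2 * e + 2 * r) = 14 * e + 14 * r + 30 * C"
    unfolding R_def by simp
  ultimately show ?thesis
    using theta_seg_near_two_points[OF \<beta>(1) \<theta> t(1,2) E _ near_t] by metis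
qed

lemma one_in_elem_sub: "group G \<Longrightarrow> f \<in> carrier G \<Longrightarrow> \<one>\<^bsub>G\<^esub> \<in> elem_sub G f"
  unfolding elem_sub_def by (auto intro!: exI[of _ "1::nat"] simp: group.is_monoid monoid.inv_one)

lemma isometric_action_inv_cancel:
  assumes "isometric_action G act" "t \<in> carrier G"
  shows "act (inv\<^bsub>G\<^esub> t) (act t x) = x"
proof -
  interpret group G
    using assms(1) unfolding isometric_action_def by simp
  show ?thesis
    using assms unfolding isometric_action_def by (metis inv_closed l_inv)
qed

lemma has_barrier_iff_translate:
  assumes ia: "isometric_action G act" and h: "h \<in> carrier G"
  shows "has_barrier G act x0 r h \<sigma> \<longleftrightarrow> (\<exists>t\<in>carrier G.
    infdist x0 (act (inv\<^bsub>G\<^esub> t) ` \<sigma>) \<le> r \<and> infdist (act h x0) (act (inv\<^bsub>G\<^esub> t) ` \<sigma>) \<le> r)"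
proof -
  have "infdist (act t y) \<sigma> = infdist y (act (inv\<^bsub>G\<^esub> t) ` \<sigma>)" if "t \<in> carrier G" for t y
    using infdist_isometry_image[of "act (inv\<^bsub>G\<^esub> t)" "act t y" \<sigma>] ia that
    unfolding isometric_action_def by (simp add: isometric_action_inv_cancel[OF ia that])
  moreover have "act (t \<otimes>\<^bsub>G\<^esub> h) x0 = act t (act h x0)" if "t \<in> carrier G" for t
    using ia that h unfolding isometric_action_def by simp
  ultimately show ?thesis
    unfolding has_barrier_def by auto
qed

lemma contains_barrier_seg_initial:
  assumes ia: "isometric_action G act" and h: "h \<in> carrier G"
    and \<theta>B: "0 \<le> \<theta>" "\<theta> \<le> 1" "0 \<le> B" and R: "dist x0 (\<beta> 0) + dist x0 (act h x0) \<le> R"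
  shows "contains_barrier_seg G act x0 R h \<theta> \<beta> B"
proof -
  have grp: "group G"
    using ia unfolding isometric_action_def by simp
  have one: "\<one>\<^bsub>G\<^esub> \<in> carrier G" "act \<one>\<^bsub>G\<^esub> x0 = x0" "act (\<one>\<^bsub>G\<^esub> \<otimes>\<^bsub>G\<^esub> h) x0 = act h x0"
    using ia h group.is_monoid[OF grp] unfolding isometric_action_def by (simp_all add: monoid.l_one)
  have start: "\<beta> 0 \<in> theta_seg \<beta> B \<theta> 0"
    using \<theta>B unfolding theta_seg_def by auto
  have "infdist x0 (theta_seg \<beta> B \<theta> 0) \<le> R"
    using infdist_le[OF start, of x0] R zero_le_dist[of x0 "act h x0"] by linarith
  moreover have "infdist (act h x0) (theta_seg \<beta> B \<theta> 0) \<le> R"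
    using infdist_le[OF start, of "act h x0"] R dist_triangle[of "act h x0" "\<beta> 0" x0]
    by (simp add: dist_commute)
  ultimately show ?thesis
    unfolding contains_barrier_seg_def has_barrier_def using \<theta>B one
    by (intro exI[of _ 0] conjI bexI[of _ "\<one>\<^bsub>G\<^esub>"]) (auto simp: mult_left_le_one_le)
qed

lemma contracting_set_through_axis:
  assumes gs: "geodesic_space TYPE('x::metric_space)" and ia: "isometric_action G act"
    and ax: "\<And>\<gamma> a b. a \<in> axis G act x0 f \<Longrightarrow> b \<in> axis G act x0 f \<Longrightarrow>
      geodesic_seg \<gamma> a b (dist a b) \<Longrightarrow> contracting_set C (\<gamma> ` {0..dist a b})"
    and f: "f \<in> carrier G" and h: "h \<in> elem_sub G f"
  obtains U where "contracting_set C U" "compact U" "(x0::'x) \<in> U" "act h x0 \<in> U"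
    "diameter U \<le> dist x0 (act h x0)"
proof -
  define D where "D = dist x0 (act h x0)"
  obtain \<sigma> where \<sigma>: "geodesic_seg \<sigma> x0 (act h x0) D"
    using gs unfolding geodesic_space_def D_def by blast
  have "group G" "act \<one>\<^bsub>G\<^esub> x0 = x0"
    using ia unfolding isometric_action_def by simp_all
  then have "x0 \<in> axis G act x0 f" "act h x0 \<in> axis G act x0 f"
    using one_in_elem_sub[OF _ f] h unfolding axis_def by (metis image_eqI)+
  then have "contracting_set C (\<sigma> ` {0..D})"
    using ax \<sigma> unfolding D_def by blast
  moreover have \<sigma>_path: "geodesic_path \<sigma> D" "0 \<le> D" "\<sigma> 0 = x0" "\<sigma> D = act h x0"
    using \<sigma> by (simp_all add: geodesic_seg_iff)
  ultimately show ?thesis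
    using that compact_geodesic_path_image[OF \<sigma>_path(1) order_refl order_refl]
      diameter_geodesic_path_image[OF \<sigma>_path(1,2)]
      image_eqI[of x0 \<sigma> 0 "{0..D}"] image_eqI[of "act h x0" \<sigma> D "{0..D}"]
    unfolding D_def by auto
qed

lemma contains_barrier_seg_transfer_long:
  assumes gs: "geodesic_space TYPE('x::metric_space)" and ia: "isometric_action G act" and "C > 0"
    and ax: "\<And>\<gamma> a b. a \<in> axis G act x0 f \<Longrightarrow> b \<in> axis G act x0 f \<Longrightarrow>
      geodesic_seg \<gamma> a b (dist a b) \<Longrightarrow> contracting_set C (\<gamma> ` {0..dist a b})"
    and f: "f \<in> carrier G" and h: "h \<in> elem_sub G f"
    and \<alpha>: "geodesic_path \<alpha> A" "0 \<le> A" and \<beta>: "geodesic_path \<beta> B" "0 \<le> B"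
    and ends: "dist (\<alpha> 0) (\<beta> 0) \<le> e" "dist (\<alpha> A) (\<beta> B) \<le> e"
    and \<theta>: "0 \<le> \<theta>" "\<theta> \<le> 1"
    and bar: "contains_barrier_seg G act x0 r h \<theta> \<alpha> A"
    and long: "dist x0 (act h x0) > 4 * e + 4 * r + 9 * C"
  shows "contains_barrier_seg G act (x0::'x) (14 * e + 14 * r + 30 * C) h \<theta> \<beta> B"
proof -
  have grp: "group G"
    using ia unfolding isometric_action_def by simp
  have hG: "h \<in> carrier G"
    using h unfolding elem_sub_def by simp
  obtain U where cs: "contracting_set C U" and U: "compact U" "x0 \<in> U" "act h x0 \<in> U"
    "diameter U \<le> dist x0 (act h x0)"
    using contracting_set_through_axis[OF gs ia ax f h] by blast
  obtain s where s: "0 \<le> s" "s + \<theta> * A \<le> A"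
    and "has_barrier G act x0 r h (theta_seg \<alpha> A \<theta> s)"
    using bar unfolding contains_barrier_seg_def by blast
  then obtain t where t: "t \<in> carrier G"
    and near: "infdist x0 (act (inv\<^bsub>G\<^esub> t) ` theta_seg \<alpha> A \<theta> s) \<le> r"
      "infdist (act h x0) (act (inv\<^bsub>G\<^esub> t) ` theta_seg \<alpha> A \<theta> s) \<le> r"
    unfolding has_barrier_iff_translate[OF ia hG] by blast
  define \<phi> where "\<phi> = act (inv\<^bsub>G\<^esub> t)"
  have \<phi>_iso: "\<And>x y. dist (\<phi> x) (\<phi> y) = dist x y"
    using ia t group.inv_closed[OF grp] unfolding \<phi>_def isometric_action_def by simp
  have \<phi>_seg: "\<And>\<gamma> L s. \<phi> ` theta_seg \<gamma> L \<theta> s = theta_seg (\<lambda>x. \<phi> (\<gamma> x)) L \<theta> s"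
    by (simp add: theta_seg_def image_image)
  have "dist (\<phi> (\<alpha> 0)) (\<phi> (\<beta> 0)) \<le> e" "dist (\<phi> (\<alpha> A)) (\<phi> (\<beta> B)) \<le> e"
    using ends by (simp_all add: \<phi>_iso)
  moreover note near' = near[folded \<phi>_def, unfolded \<phi>_seg]
  ultimately obtain s' where s': "0 \<le> s'" "s' + \<theta> * B \<le> B"
    "infdist x0 (theta_seg (\<lambda>x. \<phi> (\<beta> x)) B \<theta> s') \<le> 14 * e + 14 * r + 30 * C"
    "infdist (act h x0) (theta_seg (\<lambda>x. \<phi> (\<beta> x)) B \<theta> s') \<le> 14 * e + 14 * r + 30 * C"
    using theta_seg_transfer[OF gs \<open>C > 0\<close> cs U geodesic_path_isometry[OF \<phi>_iso \<alpha>(1)] \<alpha>(2)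
        geodesic_path_isometry[OF \<phi>_iso \<beta>(1)] \<beta>(2) _ _ \<theta> s near' long] by blast
  then have "infdist x0 (act (inv\<^bsub>G\<^esub> t) ` theta_seg \<beta> B \<theta> s') \<le> 14 * e + 14 * r + 30 * C"
    "infdist (act h x0) (act (inv\<^bsub>G\<^esub> t) ` theta_seg \<beta> B \<theta> s') \<le> 14 * e + 14 * r + 30 * C"
    by (simp_all add: \<phi>_def theta_seg_def image_image)
  then have "has_barrier G act x0 (14 * e + 14 * r + 30 * C) h (theta_seg \<beta> B \<theta> s')"
    unfolding has_barrier_iff_translate[OF ia hG] using t by blast
  then show ?thesis
    unfolding contains_barrier_seg_def using s' by blast
qed

lemma contains_barrier_seg_transfer:
  assumes gs: "geodesic_space TYPE('x::metric_space)" and ia: "isometric_action G act" and "C > 0"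
    and ax: "\<And>\<gamma> a b. a \<in> axis G act x0 f \<Longrightarrow> b \<in> axis G act x0 f \<Longrightarrow>
      geodesic_seg \<gamma> a b (dist a b) \<Longrightarrow> contracting_set C (\<gamma> ` {0..dist a b})"
    and f: "f \<in> carrier G" and h: "h \<in> elem_sub G f" and \<theta>: "\<theta> \<in> {0<..1}"
    and \<alpha>: "geodesic_seg \<alpha> a1 b1 (dist a1 b1)" and \<beta>: "geodesic_seg \<beta> a2 b2 (dist a2 b2)"
    and balls: "a1 \<in> cball x0 M" "a2 \<in> cball x0 M" "b1 \<in> cball y M" "b2 \<in> cball y M"
    and bar: "contains_barrier_seg G act (x0::'x) r h \<theta> \<alpha> (dist a1 b1)"
  shows "contains_barrier_seg G act x0 (14 * r + 28 * M + 30 * C) h \<theta> \<beta> (dist a2 b2)"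
proof -
  have "0 \<le> r"
    using bar infdist_nonneg unfolding contains_barrier_seg_def has_barrier_def by (meson order_trans)
  have \<alpha>_path: "geodesic_path \<alpha> (dist a1 b1)" "\<alpha> 0 = a1" "\<alpha> (dist a1 b1) = b1"
    and \<beta>_path: "geodesic_path \<beta> (dist a2 b2)" "\<beta> 0 = a2" "\<beta> (dist a2 b2) = b2"
    using \<alpha> \<beta> by (simp_all add: geodesic_seg_iff)
  have ends: "dist (\<alpha> 0) (\<beta> 0) \<le> 2 * M" "dist (\<alpha> (dist a1 b1)) (\<beta> (dist a2 b2)) \<le> 2 * M"
    using balls dist_triangle[of a1 a2 x0] dist_triangle[of b1 b2 y] \<alpha>_path(2,3) \<beta>_path(2,3)
    by (simp_all add: dist_commute)
  show ?thesis
  proof (cases "dist x0 (act h x0) \<le> 4 * (2 * M) + 4 * r + 9 * C")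
    case True
    have "h \<in> carrier G"
      using h unfolding elem_sub_def by simp
    moreover have "dist x0 (\<beta> 0) \<le> M"
      using balls(2) \<beta>_path(2) by simp
    then have "dist x0 (\<beta> 0) + dist x0 (act h x0) \<le> 14 * r + 28 * M + 30 * C"
      using True \<open>0 \<le> r\<close> \<open>C > 0\<close> zero_le_dist[of x0 "\<beta> 0"] by linarith
    ultimately show ?thesis
      using \<theta> by (intro contains_barrier_seg_initial[OF ia]) auto
  next
    case False
    then show ?thesis
      using contains_barrier_seg_transfer_long[OF gs ia \<open>C > 0\<close> ax f h \<alpha>_path(1) zero_le_dist
          \<beta>_path(1) zero_le_dist ends _ _ bar] \<theta> by (simp add: algebra_simps)
  qed
qed

theorem lemma4p3:
  fixes G :: "('g, 'b) monoid_scheme" and act :: "'g \<Rightarrow> 'x::metric_space \<Rightarrow> 'x"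
    and x0 :: 'x and f :: 'g and C :: real
  assumes "proper_metric TYPE('x)" and "geodesic_space TYPE('x)"
    and "isometric_action G act" and "proper_action G act"
    and "contracting_elt G act x0 f"
    and "C > 0"
    and "\<forall>\<gamma> a b. a \<in> axis G act x0 f \<longrightarrow> b \<in> axis G act x0 f \<longrightarrow>
            geodesic_seg \<gamma> a b (dist a b) \<longrightarrow> contracting_set C (\<gamma> ` {0..dist a b})"
  shows "\<forall>M>0. \<exists>L1>0. \<forall>r>0. \<exists>r'.
     \<forall>h g \<theta> \<alpha> a1 b1 \<beta> a2 b2.
       h \<in> elem_sub G f \<longrightarrow> dist x0 (act h x0) > L1 \<longrightarrow> g \<in> carrier G \<longrightarrow>
       \<theta> \<in> {0<..1} \<longrightarrow>
       a1 \<in> cball x0 M \<longrightarrow> b1 \<in> cball (act g x0) M \<longrightarrow> geodesic_seg \<alpha> a1 b1 (dist a1 b1) \<longrightarrow>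
       a2 \<in> cball x0 M \<longrightarrow> b2 \<in> cball (act g x0) M \<longrightarrow> geodesic_seg \<beta> a2 b2 (dist a2 b2) \<longrightarrow>
       contains_barrier_seg G act x0 r h \<theta> \<alpha> (dist a1 b1) \<longrightarrow>
       contains_barrier_seg G act x0 r' h \<theta> \<beta> (dist a2 b2)"
proof -
  have f: "f \<in> carrier G"
    using assms(5) unfolding contracting_elt_def by simp
  show ?thesis
    using contains_barrier_seg_transfer[OF assms(2,3,6) assms(7)[rule_format] f] zero_less_one
    by blast
qed

end
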